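(* Let $\alpha$ be a parameter, $C=\frac18-\frac{\alpha^2}2$, $a_k(\alpha)=\frac{(\alpha-k+\frac12)_{2k}}{2^kk!}$ for $k\ge0$, $\psi(z,x)=\sum_{k\ge0}\frac{a_k(\alpha)}{z^k(1-x)^k}e^{zx}$, $\psi^*(z,x)=\psi(-z,x)$ and $D(z,w)=\frac{\psi(z,0)\partial_x\psi^*(w,0)-\psi^*(w,0)\partial_x\psi(z,0)}{w^2-z^2}$. Then $$D(z,w)=\frac1{z-w}+\sum_{m,n\ge0}\frac{A_{mn}(\alpha)}{z^m(-w)^n}$$ (in the sense that $\psi(z,0)\partial_x\psi^*(w,0)-\psi^*(w,0)\partial_x\psi(z,0)+(w+z)=(w^2-z^2)\sum_{m,n\ge0}A_{mn}(\alpha)z^{-m}(-w)^{-n}$) with $A_{mn}(\alpha)\in\mathbb Q[\alpha]$ determined by $$A_{m,n+1}(\alpha)-A_{m+1,n}(\alpha)=\frac{m-n}{m+n}a_m(\alpha)a_n(\alpha)\ \ ((m,n)\ne(0,0)),\qquad A_{m,0}(\alpha)=A_{0,n}(\alpha)=0,$$ and, for all $m,n\ge1$, explicitly given by each of $$A_{mn}(\alpha)=\sum_{r\ge m,\,s\ge0,\,r+s=m+n-1}\frac{r-s}{r+s}a_r(\alpha)a_s(\alpha)=\sum_{r\ge n,\,s\ge0,\,r+s=m+n-1}\frac{r-s}{r+s}a_r(\alpha)a_s(\alpha)$$ $$=\frac{2\,m!\,n!\,a_m(\alpha)a_n(\alpha)}{(m+n-1)\,(m+n-1)!}\sum_{k\in\mathbb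 Z}(-1)^k\frac{\binom{m+n-1}{m+k}\binom{m+n-1}{n+k}}{\alpha-k-\frac12}.$$
   Context: $(a)_j$ denotes the rising Pochhammer symbol; binomial coefficients with arguments out of range are $0$, so the sum over $k$ is finite. The functions $\psi,\psi^*$ are formal series in $z^{-1}$ with coefficients in $\mathbb Q[\alpha][[x]]$ times $e^{\pm zx}$; $\partial_x$ acts on the coefficients and on the exponential. *)

theory Defs
  imports "HOL-Analysis.Analysis" "HOL-Computational_Algebra.Polynomial"
begin

definition acoef :: "real \<Rightarrow> nat \<Rightarrow> real" where
  "acoef \<alpha> k = pochhammer (\<alpha> - real k + 1/2) (2*k) / (2^k * fact k)"

text \<open>A formal object  F(z,x) = sum_k c_k(x) z^(-k) e^(lam z x)  is represented by
  its coefficient functions c and the constant lam.  The following give the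
  coefficient of z^i (i an integer) of F(z,0) and of (d/dx F)(z,0), where
  d/dx acts on the coefficients and on the exponential.\<close>
definition eval0 :: "(nat \<Rightarrow> real \<Rightarrow> real) \<Rightarrow> int \<Rightarrow> real" where
  "eval0 c i = (if i \<le> 0 then c (nat (-i)) 0 else 0)"

definition dx0 :: "real \<Rightarrow> (nat \<Rightarrow> real \<Rightarrow> real) \<Rightarrow> int \<Rightarrow> real" where
  "dx0 lam c i = (if i \<le> 0 then deriv (c (nat (-i))) 0 else 0)
               + lam * (if i \<le> 1 then c (nat (1 - i)) 0 else 0)"

text \<open>psi(z,x) = sum_k a_k z^(-k) (1-x)^(-k) e^(zx): coefficients, with lam = 1.\<close>
definition psi_c :: "real \<Rightarrow> nat \<Rightarrow> real \<Rightarrow> real" where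
  "psi_c \<alpha> k x = acoef \<alpha> k / (1 - x) ^ k"

text \<open>psi*(w,x) = psi(-w,x) = sum_k (-1)^k a_k w^(-k) (1-x)^(-k) e^(-wx): lam = -1.\<close>
definition psistar_c :: "real \<Rightarrow> nat \<Rightarrow> real \<Rightarrow> real" where
  "psistar_c \<alpha> k x = (-1) ^ k * psi_c \<alpha> k x"

text \<open>Coefficient of z^i w^j in
  psi(z,0) d_x psi*(w,0) - psi*(w,0) d_x psi(z,0) + (w + z).\<close>
definition lhs_coeff :: "real \<Rightarrow> int \<Rightarrow> int \<Rightarrow> real" where
  "lhs_coeff \<alpha> i j =
     eval0 (psi_c \<alpha>) i * dx0 (-1) (psistar_c \<alpha>) j
   - eval0 (psistar_c \<alpha>) j * dx0 1 (psi_c \<alpha>) i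
   + (if i = 0 \<and> j = 1 then 1 else 0) + (if i = 1 \<and> j = 0 then 1 else 0)"

text \<open>Coefficient of z^i w^j in  sum_{m,n>=0} A_mn z^(-m) (-w)^(-n).\<close>
definition ser_coeff :: "(nat \<Rightarrow> nat \<Rightarrow> real) \<Rightarrow> int \<Rightarrow> int \<Rightarrow> real" where
  "ser_coeff A i j = (if i \<le> 0 \<and> j \<le> 0 then (-1) ^ nat (-j) * A (nat (-i)) (nat (-j)) else 0)"

text \<open>Coefficient of z^i w^j in  (w^2 - z^2) sum_{m,n>=0} A_mn z^(-m) (-w)^(-n).\<close>
definition rhs_coeff :: "(nat \<Rightarrow> nat \<Rightarrow> real) \<Rightarrow> int \<Rightarrow> int \<Rightarrow> real" where
  "rhs_coeff A i j = ser_coeff A i (j - 2) - ser_coeff A (i - 2) j"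

definition ibinom :: "nat \<Rightarrow> int \<Rightarrow> real" where
  "ibinom N j = (if 0 \<le> j then real (N choose nat j) else 0)"

end

theory Submission
  imports Defs
begin

(*
  A_mn is the tail r >= m of the antidiagonal sum over r + s = m + n - 1 of the antisymmetric
  kernel f(r, s) = (r - s)/(r + s) a_r a_s.  The recurrence telescopes, and antisymmetry makes
  the full antidiagonal sum vanish, which gives the boundary values and the second formula.
  Because 2 (k + 1) a_(k+1) = (alpha^2 - (k + 1/2)^2) a_k, the second difference
  A_(m,n+2) - A_(m+2,n) is, up to the sign (-1)^n, the coefficient of z^-m w^-n in
  psi d_x psi* - psi* d_x psi.
  The binomial formula satisfies the same recurrence: a ratio identity between neighbouring
  binomials lets the factor alpha^2 - (k + 1/2)^2 cancel the pole at alpha = k + 1/2, and what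
  remains are the zeroth and first moments of an alternating convolution of binomials, read off
  from (1 - x)^N (1 + x)^N = (1 - x^2)^N.
*)

section \<open>Tails of antidiagonal sums\<close>

definition antidiag_tail :: "(nat \<Rightarrow> nat \<Rightarrow> 'a::comm_monoid_add) \<Rightarrow> nat \<Rightarrow> nat \<Rightarrow> 'a" where
  "antidiag_tail f m n = (\<Sum>r\<in>{m..m+n-1}. f r (m+n-1-r))"

lemma antidiag_tail_diff:
  fixes f :: "nat \<Rightarrow> nat \<Rightarrow> 'a::ab_group_add"
  shows "antidiag_tail f m (Suc n) - antidiag_tail f (Suc m) n = f m n"
proof -
  have "{m..m+n} = insert m {Suc m..m+n}" by auto
  then show ?thesis by (simp add: antidiag_tail_def)
qed

lemma antidiag_sum_antisym:
  fixes f :: "nat \<Rightarrow> nat \<Rightarrow> real"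
  assumes antisym: "\<And>r s. f s r = - f r s"
  shows "(\<Sum>r\<le>M. f r (M - r)) = 0"
proof -
  have "(\<Sum>r\<le>M. f r (M - r)) = (\<Sum>r\<le>M. f (M - r) (M - (M - r)))"
    by (rule sum.reindex_bij_witness[where i="\<lambda>r. M - r" and j="\<lambda>r. M - r"]) auto
  also have "\<dots> = (\<Sum>r\<le>M. - f r (M - r))"
  proof (rule sum.cong[OF refl])
    fix r assume "r \<in> {..M}"
    then show "f (M - r) (M - (M - r)) = - f r (M - r)" using antisym[of r "M - r"] by simp
  qed
  finally show ?thesis by (simp add: sum_negf)
qed

lemma antidiag_tail_left_0:
  fixes f :: "nat \<Rightarrow> nat \<Rightarrow> real"
  assumes "\<And>r s. f s r = - f r s"
  shows "antidiag_tail f 0 n = 0"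
  using antidiag_sum_antisym[of f "n - 1", OF assms] by (simp add: antidiag_tail_def atLeast0AtMost)

lemma antidiag_tail_right_0:
  fixes f :: "nat \<Rightarrow> nat \<Rightarrow> real"
  assumes "\<And>r s. f s r = - f r s"
  shows "antidiag_tail f m 0 = 0"
  using antidiag_tail_left_0[of f 0, OF assms] by (cases m) (simp_all add: antidiag_tail_def)

lemma antidiag_tail_swap:
  fixes f :: "nat \<Rightarrow> nat \<Rightarrow> real"
  assumes antisym: "\<And>r s. f s r = - f r s" and pos: "1 \<le> m" "1 \<le> n"
  shows "antidiag_tail f m n = (\<Sum>r\<in>{n..m+n-1}. f r (m+n-1-r))"
proof -
  define M where "M = m + n - 1"
  have "{..M} = {..<m} \<union> {m..M}" using pos by (auto simp: M_def)
  then have "(\<Sum>r<m. f r (M - r)) + antidiag_tail f m n = 0"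
    using antidiag_sum_antisym[of f M, OF antisym]
    by (simp add: antidiag_tail_def M_def sum.union_disjoint ivl_disj_int)
  then have "antidiag_tail f m n = - (\<Sum>r<m. f r (M - r))"
    by linarith
  also have "\<dots> = (\<Sum>r<m. - f r (M - r))"
    by (simp add: sum_negf)
  also have "\<dots> = (\<Sum>r<m. f (M - r) (M - (M - r)))"
  proof (rule sum.cong[OF refl])
    fix r assume "r \<in> {..<m}"
    then show "- f r (M - r) = f (M - r) (M - (M - r))"
      using antisym[of r "M - r"] pos by (simp add: M_def)
  qed
  also have "\<dots> = (\<Sum>r\<in>{n..M}. f r (M - r))"
    by (rule sum.reindex_bij_witness[where i="\<lambda>r. M - r" and j="\<lambda>r. M - r"]) (use pos in \<open>auto simp: M_def\<close>)
  finally show ?thesis by (simp add: M_def)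
qed

lemma recurrence_unique:
  fixes B C :: "nat \<Rightarrow> nat \<Rightarrow> 'a::ab_group_add"
  assumes "\<And>m n. 0 < n \<Longrightarrow> B m (Suc n) - B (Suc m) n = C m (Suc n) - C (Suc m) n"
    and "\<And>m. B m 0 = C m 0" and "\<And>n. B 0 n = C 0 n"
  shows "B = C"
proof -
  have "B m n = C m n" for m n
  proof (induction m arbitrary: n)
    case (Suc m)
    show ?case
      using assms(1)[of n m] assms(2)[of "Suc m"] Suc.IH[of "Suc n"]
      by (cases "n = 0") (simp_all add: algebra_simps)
  qed (rule assms(3))
  then show ?thesis by blast
qed

section \<open>The coefficients A_mn\<close>

definition skew_prod :: "real \<Rightarrow> nat \<Rightarrow> nat \<Rightarrow> real" where
  "skew_prod \<alpha> r s = (real r - real s) / (real r + real s) * acoef \<alpha> r * acoef \<alpha> s"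

definition Acoef :: "nat \<Rightarrow> nat \<Rightarrow> real \<Rightarrow> real" where
  "Acoef m n \<alpha> = antidiag_tail (skew_prod \<alpha>) m n"

lemma skew_prod_antisym: "skew_prod \<alpha> s r = - skew_prod \<alpha> r s"
  unfolding skew_prod_def by (cases "real r + real s = 0") (simp_all add: field_simps)

lemma Acoef_diff: "Acoef m (Suc n) \<alpha> - Acoef (Suc m) n \<alpha> = skew_prod \<alpha> m n"
  by (simp add: Acoef_def antidiag_tail_diff)

lemma Acoef_right_0 [simp]: "Acoef m 0 \<alpha> = 0"
  unfolding Acoef_def by (rule antidiag_tail_right_0[OF skew_prod_antisym])

lemma Acoef_left_0 [simp]: "Acoef 0 n \<alpha> = 0"
  unfolding Acoef_def by (rule antidiag_tail_left_0[OF skew_prod_antisym])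

lemma Acoef_unique:
  fixes B :: "nat \<Rightarrow> nat \<Rightarrow> real \<Rightarrow> real"
  assumes "\<And>\<alpha> m n. 0 < n \<Longrightarrow> B m (Suc n) \<alpha> - B (Suc m) n \<alpha> = skew_prod \<alpha> m n"
    and "\<And>\<alpha> m. B m 0 \<alpha> = 0" and "\<And>\<alpha> n. B 0 n \<alpha> = 0"
  shows "B = Acoef"
proof -
  have "(\<lambda>m n. B m n \<alpha>) = (\<lambda>m n. Acoef m n \<alpha>)" for \<alpha>
    using assms by (intro recurrence_unique) (simp_all add: Acoef_diff)
  then show ?thesis by (metis ext)
qed

lemma acoef_0 [simp]: "acoef \<alpha> 0 = 1"
  by (simp add: acoef_def)

lemma acoef_Suc: "2 * real (Suc k) * acoef \<alpha> (Suc k) = (\<alpha>\<^sup>2 - (real k + 1/2)\<^sup>2) * acoef \<alpha> k"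
proof -
  define x where "x = \<alpha> - real k - 1/2"
  have "pochhammer x (Suc (Suc (2 * k))) = x * ((x + 1 + 2 * real k) * pochhammer (x + 1) (2 * k))"
    unfolding pochhammer_rec[of x] pochhammer_rec'[of "x + 1"] by simp
  moreover have "\<alpha> - real (Suc k) + 1/2 = x" "\<alpha> - real k + 1/2 = x + 1"
    by (simp_all add: x_def)
  ultimately have Suc_k: "acoef \<alpha> (Suc k) = x * ((x + 1 + 2 * real k) * pochhammer (x + 1) (2 * k)) / (2 ^ Suc k * fact (Suc k))"
      and k: "acoef \<alpha> k = pochhammer (x + 1) (2 * k) / (2 ^ k * fact k)"
    unfolding acoef_def by (simp_all only: mult_Suc_right add_2_eq_Suc)
  have "2 * real (Suc k) * acoef \<alpha> (Suc k) = x * (x + 1 + 2 * real k) * (pochhammer (x + 1) (2 * k) / (2 ^ k * fact k))"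
  proof -
    have "(2 ^ Suc k * fact (Suc k) :: real) = 2 * real (Suc k) * (2 ^ k * fact k)"
      by (simp add: fact_Suc del: of_nat_Suc)
    then show ?thesis unfolding Suc_k by (simp add: field_simps del: of_nat_Suc)
  qed
  also have "x * (x + 1 + 2 * real k) = \<alpha>\<^sup>2 - (real k + 1/2)\<^sup>2"
    by (simp add: x_def power2_eq_square algebra_simps)
  finally show ?thesis unfolding k .
qed

lemma Acoef_second_diff:
  "Acoef m (n + 2) \<alpha> - Acoef (m + 2) n \<alpha>
     = (real n - real m) * acoef \<alpha> m * acoef \<alpha> n
       + acoef \<alpha> m * acoef \<alpha> (Suc n) - acoef \<alpha> (Suc m) * acoef \<alpha> n"
    (is "_ = ?rhs")
proof -
  define N where "N = real m + real n + 1"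
  let ?num = "(real m - real n - 1) * acoef \<alpha> m * acoef \<alpha> (Suc n)
              + (real m + 1 - real n) * acoef \<alpha> (Suc m) * acoef \<alpha> n"
  have "?num - N * ?rhs
      = acoef \<alpha> n * (2 * real (Suc m) * acoef \<alpha> (Suc m) - (\<alpha>\<^sup>2 - (real m + 1/2)\<^sup>2) * acoef \<alpha> m)
        - acoef \<alpha> m * (2 * real (Suc n) * acoef \<alpha> (Suc n) - (\<alpha>\<^sup>2 - (real n + 1/2)\<^sup>2) * acoef \<alpha> n)"
    by (simp add: N_def algebra_simps power2_eq_square)
  then have "?num = N * ?rhs"
    unfolding acoef_Suc by simp
  moreover have "N \<noteq> 0"
    by (simp add: N_def add_nonneg_eq_0_iff)
  moreover have "Acoef m (n + 2) \<alpha> - Acoef (m + 2) n \<alpha> = skew_prod \<alpha> m (Suc n) + skew_prod \<alpha> (Suc m) n"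
    using Acoef_diff[of m "Suc n" \<alpha>] Acoef_diff[of "Suc m" n \<alpha>] by (simp add: numeral_2_eq_2)
  moreover have "skew_prod \<alpha> m (Suc n) + skew_prod \<alpha> (Suc m) n = ?num / N"
    by (simp add: skew_prod_def N_def add_divide_distrib add_ac)
  ultimately show ?thesis
    by simp
qed

definition rat_poly_fun :: "(real \<Rightarrow> real) \<Rightarrow> bool" where
  "rat_poly_fun f \<longleftrightarrow> (\<exists>p. (\<forall>i. coeff p i \<in> \<rat>) \<and> f = poly p)"

lemma rat_poly_fun_const: "c \<in> \<rat> \<Longrightarrow> rat_poly_fun (\<lambda>x. c)"
  unfolding rat_poly_fun_def by (intro exI[of _ "[:c:]"]) (simp add: coeff_pCons fun_eq_iff split: nat.split)

lemma rat_poly_fun_id: "rat_poly_fun (\<lambda>x. x)"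
  unfolding rat_poly_fun_def by (intro exI[of _ "[:0, 1:]"]) (simp add: coeff_pCons fun_eq_iff split: nat.split)

lemma rat_poly_fun_add:
  assumes "rat_poly_fun f" "rat_poly_fun g" shows "rat_poly_fun (\<lambda>x. f x + g x)"
proof -
  obtain p q where "\<forall>i. coeff p i \<in> \<rat>" "f = poly p" "\<forall>i. coeff q i \<in> \<rat>" "g = poly q"
    using assms unfolding rat_poly_fun_def by blast
  then show ?thesis
    unfolding rat_poly_fun_def by (intro exI[of _ "p + q"]) auto
qed

lemma rat_poly_fun_mult:
  assumes "rat_poly_fun f" "rat_poly_fun g" shows "rat_poly_fun (\<lambda>x. f x * g x)"
proof -
  obtain p q where "\<forall>i. coeff p i \<in> \<rat>" "f = poly p" "\<forall>i. coeff q i \<in> \<rat>" "g = poly q"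
    using assms unfolding rat_poly_fun_def by blast
  then show ?thesis
    unfolding rat_poly_fun_def by (intro exI[of _ "p * q"]) (auto simp: coeff_mult intro!: Rats_sum Rats_mult)
qed

lemma rat_poly_fun_sum:
  "finite A \<Longrightarrow> (\<And>a. a \<in> A \<Longrightarrow> rat_poly_fun (f a)) \<Longrightarrow> rat_poly_fun (\<lambda>x. \<Sum>a\<in>A. f a x)"
  by (induction A rule: finite_induct) (auto intro: rat_poly_fun_add rat_poly_fun_const)

lemma rat_poly_fun_prod:
  "finite A \<Longrightarrow> (\<And>a. a \<in> A \<Longrightarrow> rat_poly_fun (f a)) \<Longrightarrow> rat_poly_fun (\<lambda>x. \<Prod>a\<in>A. f a x)"
  by (induction A rule: finite_induct) (auto intro: rat_poly_fun_mult rat_poly_fun_const)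

lemma rat_poly_fun_ratpoly:
  assumes "rat_poly_fun f" obtains p :: "rat poly" where "\<And>x. f x = poly (map_poly of_rat p) x"
  using assms unfolding rat_poly_fun_def by (metis ratpolyE)

lemma rat_poly_fun_acoef: "rat_poly_fun (\<lambda>\<alpha>. acoef \<alpha> k)"
proof -
  have "acoef \<alpha> k = 1 / (2^k * fact k) * (\<Prod>i<2*k. \<alpha> + (real i - real k + 1/2))" for \<alpha>
    unfolding acoef_def pochhammer_prod by (simp add: algebra_simps atLeast0LessThan)
  moreover have "(fact k :: real) \<in> \<rat>"
    by (metis Rats_of_nat of_nat_fact)
  ultimately show ?thesis
    by (simp only:, intro rat_poly_fun_mult rat_poly_fun_const rat_poly_fun_prod rat_poly_fun_add rat_poly_fun_id)
       auto
qed

lemma rat_poly_fun_Acoef: "rat_poly_fun (Acoef m n)"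
  unfolding Acoef_def antidiag_tail_def skew_prod_def
  by (intro rat_poly_fun_sum rat_poly_fun_mult rat_poly_fun_const rat_poly_fun_acoef) auto

section \<open>Coefficients of psi d_x psi* - psi* d_x psi\<close>

lemma deriv_div_power_at_0: "deriv (\<lambda>x. c / (1 - x) ^ k) 0 = c * real k"
proof -
  have "((\<lambda>x::real. c / (1 - x) ^ k) has_real_derivative c * real k) (at 0)"
    by (auto intro!: derivative_eq_intros simp: field_simps)
  then show ?thesis by (rule DERIV_imp_deriv)
qed

lemma eval0_psi_c: "eval0 (psi_c \<alpha>) i = (if i \<le> 0 then acoef \<alpha> (nat (-i)) else 0)"
  by (simp add: eval0_def psi_c_def)

lemma eval0_psistar_c:
  "eval0 (psistar_c \<alpha>) i = (if i \<le> 0 then (-1) ^ nat (-i) * acoef \<alpha> (nat (-i)) else 0)"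
  by (simp add: eval0_def psistar_c_def psi_c_def)

lemma dx0_psi_c:
  "dx0 1 (psi_c \<alpha>) i = (if i \<le> 0 then real (nat (-i)) * acoef \<alpha> (nat (-i)) else 0)
     + (if i \<le> 1 then acoef \<alpha> (nat (1 - i)) else 0)"
proof -
  have "psi_c \<alpha> k = (\<lambda>x. acoef \<alpha> k / (1 - x) ^ k)" for k
    by (simp add: psi_c_def fun_eq_iff)
  then show ?thesis by (simp add: dx0_def deriv_div_power_at_0 psi_c_def mult.commute)
qed

lemma dx0_psistar_c:
  "dx0 (-1) (psistar_c \<alpha>) i = (if i \<le> 0 then (-1) ^ nat (-i) * real (nat (-i)) * acoef \<alpha> (nat (-i)) else 0)
     - (if i \<le> 1 then (-1) ^ nat (1 - i) * acoef \<alpha> (nat (1 - i)) else 0)"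
proof -
  have "psistar_c \<alpha> k = (\<lambda>x. (-1) ^ k * acoef \<alpha> k / (1 - x) ^ k)" for k
    by (simp add: psistar_c_def psi_c_def fun_eq_iff)
  then show ?thesis by (simp add: dx0_def deriv_div_power_at_0 psistar_c_def psi_c_def mult_ac)
qed

lemma Acoef_1_left: "0 < n \<Longrightarrow> Acoef 1 n \<alpha> = acoef \<alpha> n"
  using Acoef_diff[of 0 n \<alpha>] by (simp add: skew_prod_def)

lemma Acoef_1_right: "0 < m \<Longrightarrow> Acoef m 1 \<alpha> = acoef \<alpha> m"
  using Acoef_diff[of m 0 \<alpha>] by (simp add: skew_prod_def)

lemma lhs_coeff_eq_rhs_coeff: "lhs_coeff \<alpha> i j = rhs_coeff (\<lambda>m n. Acoef m n \<alpha>) i j"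
proof -
  note coeff_simps = lhs_coeff_def rhs_coeff_def ser_coeff_def
    eval0_psi_c eval0_psistar_c dx0_psi_c dx0_psistar_c
  have "(\<exists>m. i = - int m) \<or> i = 1 \<or> i = 2 \<or> i \<ge> 3" "(\<exists>n. j = - int n) \<or> j = 1 \<or> j = 2 \<or> j \<ge> 3"
    by presburger+
  then show ?thesis
  proof (elim disjE exE)
    fix m n assume ij: "i = - int m" "j = - int n"
    have "rhs_coeff (\<lambda>m n. Acoef m n \<alpha>) i j = (-1) ^ n * (Acoef m (n + 2) \<alpha> - Acoef (m + 2) n \<alpha>)"
      using ij by (simp add: coeff_simps nat_add_distrib algebra_simps)
    also have "\<dots> = lhs_coeff \<alpha> i j"
      unfolding Acoef_second_diff using ij by (simp add: coeff_simps nat_add_distrib algebra_simps)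
    finally show ?thesis by simp
  qed (auto simp: coeff_simps Acoef_1_left[unfolded One_nat_def] Acoef_1_right[unfolded One_nat_def])
qed

section \<open>Alternating binomial convolutions\<close>

lemma ibinom_nat [simp]: "ibinom N (int j) = real (N choose j)"
  by (simp add: ibinom_def)

lemma ibinom_eq_0: "j < 0 \<or> int N < j \<Longrightarrow> ibinom N j = 0"
  by (auto simp: ibinom_def binomial_eq_0)

lemma ibinom_symmetric: "ibinom N j = ibinom N (int N - j)"
proof (cases "0 \<le> j \<and> j \<le> int N")
  case True
  then obtain i where "j = int i" "i \<le> N" by (metis nat_int nonneg_int_cases of_nat_le_iff)
  then show ?thesis by (simp add: of_nat_diff[symmetric] binomial_symmetric[of i N] del: of_nat_diff)
qed (auto simp: ibinom_eq_0)

lemma ibinom_succ: "ibinom N (j + 1) * real_of_int (j + 1) = ibinom N j * (real N - real_of_int j)"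
proof (cases "j \<ge> 0")
  case True
  then obtain i where i: "j = int i" by (metis nonneg_eq_int)
  have "real (Suc i) * real (N choose Suc i) = real (N choose i) * (real N - real i)"
  proof (cases "i \<le> N")
    case True
    have "Suc i * (N choose Suc i) = (N - i) * (N choose i)"
      using times_binomial_minus1_eq[of "Suc i" N] binomial_absorb_comp[of N i] by simp
    then have "real (Suc i) * real (N choose Suc i) = real (N - i) * real (N choose i)"
      by (metis of_nat_mult)
    then show ?thesis using True by (simp add: of_nat_diff mult.commute)
  qed (simp add: binomial_eq_0)
  moreover have "j + 1 = int (Suc i)" using i by simp
  ultimately show ?thesis
    unfolding i by (simp only: ibinom_nat of_int_of_nat_eq mult.commute)
qed (auto simp: ibinom_eq_0)

lemma ibinom_neighbour_identity:
  assumes "N = m + n"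
  shows "((real_of_int k + 1/2)\<^sup>2 - (real n + 1/2)\<^sup>2) * (ibinom N (int m + k) * ibinom N (int n + 1 + k))
       = ((real_of_int k + 1/2)\<^sup>2 - (real m + 1/2)\<^sup>2) * (ibinom N (int m + 1 + k) * ibinom N (int n + k))"
proof -
  define a where "a = ibinom N (int m + k)"
  define a' where "a' = ibinom N (int m + 1 + k)"
  define b where "b = ibinom N (int n + k)"
  define b' where "b' = ibinom N (int n + 1 + k)"
  have b_step: "b' * (real n + 1 + real_of_int k) = b * (real m - real_of_int k)"
    using ibinom_succ[of N "int n + k"] assms by (simp add: a_def a'_def b_def b'_def algebra_simps)
  have a_step: "a' * (real m + 1 + real_of_int k) = a * (real n - real_of_int k)"
    using ibinom_succ[of N "int m + k"] assms by (simp add: a_def a'_def b_def b'_def algebra_simps)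
  have "((real_of_int k + 1/2)\<^sup>2 - (real n + 1/2)\<^sup>2) * (a * b')
      = (real_of_int k - real n) * a * (b' * (real n + 1 + real_of_int k))"
    by (simp add: algebra_simps power2_eq_square)
  also have "\<dots> = (real_of_int k - real m) * b * (a * (real n - real_of_int k))"
    unfolding b_step by (simp add: algebra_simps)
  also have "\<dots> = ((real_of_int k + 1/2)\<^sup>2 - (real m + 1/2)\<^sup>2) * (a' * b)"
    unfolding a_step[symmetric] by (simp add: algebra_simps power2_eq_square)
  finally show ?thesis by (simp add: a_def a'_def b_def b'_def)
qed

lemma coeff_one_minus_X2_power:
  "coeff ([:1, 0, -1:] ^ L :: real poly) t = (if even t then (-1) ^ (t div 2) * real (L choose (t div 2)) else 0)"
proof -
  have "[:1, 0, -1:] = monom (-1 :: real) 2 + 1"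
    by (simp add: monom_altdef numeral_2_eq_2 one_pCons)
  then have "[:1, 0, -1:] ^ L = (\<Sum>k\<le>L. monom (real (L choose k) * (-1) ^ k) (2 * k))"
    by (simp add: binomial_ring monom_power of_nat_monom mult_monom mult.commute)
  then show ?thesis
    by (auto simp: coeff_sum elim!: evenE intro!: sum.neutral)
qed

lemma coeff_linear_power: "coeff ([:1, b:] ^ n) i = real (n choose i) * (b :: real) ^ i"
proof (cases "i \<le> n")
  case False
  have "degree ([:1, b:] ^ n) \<le> n"
    by (rule order.trans[OF degree_power_le]) (simp add: degree_pCons_le)
  then show ?thesis using False by (simp add: coeff_eq_0 binomial_eq_0)
qed (simp add: coeff_linear_poly_power)

lemma alternating_choose_convolution:
  "(\<Sum>j\<le>t. (-1) ^ j * real (K choose j) * real (L choose (t - j))) = coeff ([:1, -1:] ^ K * [:1, 1:] ^ L) t"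
  unfolding coeff_mult coeff_linear_power by (simp add: mult_ac)

lemma alternating_choose_convolution_odd:
  "odd t \<Longrightarrow> (\<Sum>j\<le>t. (-1) ^ j * real (N choose j) * real (N choose (t - j))) = 0"
proof -
  have "[:1, -1:] ^ N * [:1, 1:] ^ N = ([:1, 0, -1:] :: real poly) ^ N"
    by (simp flip: power_mult_distrib)
  then show "odd t \<Longrightarrow> ?thesis"
    by (simp add: alternating_choose_convolution coeff_one_minus_X2_power)
qed

lemma alternating_choose_convolution_Suc:
  "(\<Sum>j\<le>2 * r. (-1) ^ j * real (K choose j) * real (Suc K choose (2 * r - j))) = (-1) ^ r * real (K choose r)"
proof -
  have "[:1, -1:] * [:1, 1:] = ([:1, 0, -1:] :: real poly)"
    by simp
  then have "[:1, -1:] ^ K * [:1, 1:] ^ Suc K = ([:1, 0, -1:] :: real poly) ^ K * [:1, 1:]"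
    by (simp only: power_Suc2 mult.assoc[symmetric] power_mult_distrib[symmetric])
  also have "\<dots> = [:1, 0, -1:] ^ K + pCons 0 ([:1, 0, -1:] ^ K)"
    by (simp add: mult_pCons_right)
  finally show ?thesis
    by (cases r) (simp_all add: alternating_choose_convolution coeff_one_minus_X2_power)
qed

lemma alternating_choose_moment:
  assumes "1 \<le> m" "1 \<le> N"
  shows "(\<Sum>j\<le>2 * m - 1. real j * ((-1) ^ j * real (N choose j) * real (N choose (2 * m - 1 - j))))
       = (-1) ^ m * real m * real (N choose m)"
proof -
  define K where "K = N - 1"
  have N: "N = Suc K" and twice: "2 * m - 1 = Suc (2 * (m - 1))"
    using assms by (simp_all add: K_def)
  have "Suc i * (N choose Suc i) = N * (K choose i)" for i
    using times_binomial_minus1_eq[of "Suc i" N] by (simp add: K_def)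
  then have absorb: "real (Suc i) * real (N choose Suc i) = real N * real (K choose i)" for i
    by (metis of_nat_mult)
  have "(\<Sum>j\<le>2 * m - 1. real j * ((-1) ^ j * real (N choose j) * real (N choose (2 * m - 1 - j))))
      = (\<Sum>i\<le>2 * (m - 1). - (real (Suc i) * real (N choose Suc i)) * ((-1) ^ i * real (N choose (2 * (m - 1) - i))))"
    unfolding twice sum.atMost_Suc_shift by (simp add: mult_ac)
  also have "\<dots> = - real N * (\<Sum>i\<le>2 * (m - 1). (-1) ^ i * real (K choose i) * real (Suc K choose (2 * (m - 1) - i)))"
    unfolding absorb by (simp add: N sum_distrib_left algebra_simps)
  also have "\<dots> = (-1) ^ m * (real N * real (K choose (m - 1)))"
    using assms by (cases m) (simp_all add: alternating_choose_convolution_Suc)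
  also have "real N * real (K choose (m - 1)) = real m * real (N choose m)"
  proof -
    have "m * (N choose m) = N * (K choose (m - 1))"
      using times_binomial_minus1_eq[of m N] assms by (simp add: K_def)
    then show ?thesis by (metis of_nat_mult)
  qed
  finally show ?thesis by simp
qed

lemma alternating_ibinom_sum_as_convolution:
  fixes g :: "int \<Rightarrow> real"
  assumes "{-int a..int c} \<subseteq> R" "finite R"
  shows "(\<Sum>k\<in>R. (-1) ^ nat \<bar>k\<bar> * ibinom N1 (int a + k) * ibinom N2 (int c - k) * g k)
       = (-1) ^ a * (\<Sum>j\<le>a + c. (-1) ^ j * real (N1 choose j) * real (N2 choose (a + c - j)) * g (int j - int a))"
proof -
  let ?u = "\<lambda>k. (-1) ^ nat \<bar>k\<bar> * ibinom N1 (int a + k) * ibinom N2 (int c - k) * g k"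
  have "(\<Sum>k\<in>R. ?u k) = (\<Sum>k\<in>{-int a..int c}. ?u k)"
    using assms by (intro sum.mono_neutral_right) (auto simp: ibinom_eq_0)
  also have "\<dots> = (\<Sum>j\<le>a + c. ?u (int j - int a))"
    by (rule sum.reindex_bij_witness[where j="\<lambda>k. nat (k + int a)" and i="\<lambda>j. int j - int a"]) auto
  also have "\<dots> = (-1) ^ a * (\<Sum>j\<le>a + c. (-1) ^ j * real (N1 choose j) * real (N2 choose (a + c - j)) * g (int j - int a))"
    unfolding sum_distrib_left
  proof (intro sum.cong refl)
    fix j assume "j \<in> {..a + c}"
    then have "int c - (int j - int a) = int (a + c - j)" by simp
    then have "ibinom N2 (int c - (int j - int a)) = real (N2 choose (a + c - j))" by (simp only: ibinom_nat)
    moreover have "(-1::real) ^ nat \<bar>int j - int a\<bar> = (-1) ^ a * (-1) ^ j"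
      by (simp add: power_add[symmetric] minus_one_power_iff)
    ultimately show "?u (int j - int a) = (-1) ^ a * ((-1) ^ j * real (N1 choose j) * real (N2 choose (a + c - j)) * g (int j - int a))"
      by simp
  qed
  finally show ?thesis .
qed

lemma binom_weight_sum:
  fixes g :: "int \<Rightarrow> real"
  assumes "N = m + n" "1 \<le> m"
  shows "(\<Sum>k\<in>{-(int N + 1)..int N + 1}. (-1) ^ nat \<bar>k\<bar> * ibinom N (int m + k) * ibinom N (int n + 1 + k) * g k)
       = (-1) ^ m * (\<Sum>j\<le>2 * m - 1. (-1) ^ j * real (N choose j) * real (N choose (2 * m - 1 - j)) * g (int j - int m))"
proof -
  have reflect: "ibinom N (int n + 1 + k) = ibinom N (int (m - 1) - k)" for k
  proof -
    have "int N - (int n + 1 + k) = int (m - 1) - k" using assms by (simp add: of_nat_diff)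
    then show ?thesis by (metis ibinom_symmetric)
  qed
  have "m + (m - 1) = 2 * m - 1" using assms by simp
  then show ?thesis
    unfolding reflect using alternating_ibinom_sum_as_convolution[of m "m - 1" "{-(int N + 1)..int N + 1}" N N g] assms
    by simp
qed

lemma binom_weight_left_0: "ibinom n k * ibinom n (int n + 1 + k) = 0"
  by (cases "k < 0") (simp_all add: ibinom_eq_0)

lemma binom_weight_moment_0:
  assumes "N = m + n"
  shows "(\<Sum>k\<in>{-(int N + 1)..int N + 1}. (-1) ^ nat \<bar>k\<bar> * ibinom N (int m + k) * ibinom N (int n + 1 + k)) = 0"
proof (cases "m = 0")
  case False
  then have "(\<Sum>j\<le>2 * m - 1. (-1) ^ j * real (N choose j) * real (N choose (2 * m - 1 - j))) = 0"
    by (intro alternating_choose_convolution_odd) presburger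
  then show ?thesis
    using binom_weight_sum[OF assms, of "\<lambda>_. 1"] False by simp
qed (simp add: assms binom_weight_left_0 mult.assoc)

lemma binom_weight_moment_1:
  assumes "N = m + n"
  shows "(\<Sum>k\<in>{-(int N + 1)..int N + 1}. real_of_int k * ((-1) ^ nat \<bar>k\<bar> * ibinom N (int m + k) * ibinom N (int n + 1 + k)))
       = real m * real (N choose m)"
proof (cases "m = 0")
  case False
  let ?w = "\<lambda>j. (-1) ^ j * real (N choose j) * real (N choose (2 * m - 1 - j))"
  have "(\<Sum>j\<le>2 * m - 1. ?w j) = 0"
    using False by (intro alternating_choose_convolution_odd) presburger
  moreover have "(\<Sum>j\<le>2 * m - 1. real j * ?w j) = (-1) ^ m * real m * real (N choose m)"
    using False assms by (intro alternating_choose_moment) simp_all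
  ultimately have "(\<Sum>j\<le>2 * m - 1. ?w j * real_of_int (int j - int m)) = (-1) ^ m * real m * real (N choose m)"
    by (simp add: algebra_simps sum_subtractf flip: sum_distrib_left)
  then show ?thesis
    using binom_weight_sum[OF assms, of real_of_int] False by (simp add: mult_ac)
qed (simp add: assms binom_weight_left_0 mult.assoc)

section \<open>The closed formula\<close>

definition pole_sum :: "nat \<Rightarrow> nat \<Rightarrow> nat \<Rightarrow> real \<Rightarrow> real" where
  "pole_sum N a b \<alpha> = (\<Sum>k\<in>{-(int N + 1)..int N + 1}.
     (-1) ^ nat \<bar>k\<bar> * ibinom N (int a + k) * ibinom N (int b + k) / (\<alpha> - real_of_int k - 1/2))"

lemma pole_sum_diff:
  assumes N: "N = m + n" and not_half_int: "\<forall>k::int. \<alpha> \<noteq> real_of_int k + 1/2"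
  shows "(\<alpha>\<^sup>2 - (real n + 1/2)\<^sup>2) * pole_sum N m (Suc n) \<alpha> - (\<alpha>\<^sup>2 - (real m + 1/2)\<^sup>2) * pole_sum N (Suc m) n \<alpha>
       = (real m - real n) * real (N choose m)"
proof -
  let ?R = "{-(int N + 1)..int N + 1}"
  define s where "s k = (-1 :: real) ^ nat \<bar>k\<bar>" for k :: int
  define u where "u k = ibinom N (int m + k) * ibinom N (int n + 1 + k)" for k
  define v where "v k = ibinom N (int n + k) * ibinom N (int m + 1 + k)" for k
  have moments: "(\<Sum>k\<in>?R. s k * u k) = 0" "(\<Sum>k\<in>?R. s k * v k) = 0"
      "(\<Sum>k\<in>?R. real_of_int k * (s k * u k)) = real m * real (N choose m)"
      "(\<Sum>k\<in>?R. real_of_int k * (s k * v k)) = real n * real (N choose m)"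
  proof -
    have N': "N = n + m" and "N choose n = N choose m"
      using N binomial_symmetric[of m N] by simp_all
    then show "(\<Sum>k\<in>?R. s k * u k) = 0" "(\<Sum>k\<in>?R. s k * v k) = 0"
        "(\<Sum>k\<in>?R. real_of_int k * (s k * u k)) = real m * real (N choose m)"
        "(\<Sum>k\<in>?R. real_of_int k * (s k * v k)) = real n * real (N choose m)"
      using binom_weight_moment_0[OF N] binom_weight_moment_0[OF N'] binom_weight_moment_1[OF N] binom_weight_moment_1[OF N']
      by (simp_all add: s_def u_def v_def mult_ac)
  qed
  have pole_cancels:
    "(\<alpha>\<^sup>2 - (real n + 1/2)\<^sup>2) * (s k * u k / (\<alpha> - real_of_int k - 1/2))
       - (\<alpha>\<^sup>2 - (real m + 1/2)\<^sup>2) * (s k * v k / (\<alpha> - real_of_int k - 1/2))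
     = (\<alpha> + 1/2) * (s k * u k) - (\<alpha> + 1/2) * (s k * v k) + real_of_int k * (s k * u k) - real_of_int k * (s k * v k)"
    for k
  proof -
    define d where "d = \<alpha> - real_of_int k - 1/2"
    have "d \<noteq> 0" using not_half_int[rule_format, of k] by (simp add: d_def)
    have "((real_of_int k + 1/2)\<^sup>2 - (real n + 1/2)\<^sup>2) * u k = ((real_of_int k + 1/2)\<^sup>2 - (real m + 1/2)\<^sup>2) * v k"
      using ibinom_neighbour_identity[OF N, of k] by (simp add: u_def v_def mult.commute)
    then have numerator: "(\<alpha>\<^sup>2 - (real n + 1/2)\<^sup>2) * u k - (\<alpha>\<^sup>2 - (real m + 1/2)\<^sup>2) * v k
        = d * ((\<alpha> + real_of_int k + 1/2) * (u k - v k))"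
      unfolding d_def by (simp add: algebra_simps power2_eq_square) (simp add: field_simps)
    have "(\<alpha>\<^sup>2 - (real n + 1/2)\<^sup>2) * (s k * u k / d) - (\<alpha>\<^sup>2 - (real m + 1/2)\<^sup>2) * (s k * v k / d)
        = s k * (((\<alpha>\<^sup>2 - (real n + 1/2)\<^sup>2) * u k - (\<alpha>\<^sup>2 - (real m + 1/2)\<^sup>2) * v k) / d)"
      using \<open>d \<noteq> 0\<close> by (simp add: field_simps)
    also have "\<dots> = s k * ((\<alpha> + real_of_int k + 1/2) * (u k - v k))"
      unfolding numerator using \<open>d \<noteq> 0\<close> by simp
    also have "\<dots> = (\<alpha> + 1/2) * (s k * u k) - (\<alpha> + 1/2) * (s k * v k)
        + real_of_int k * (s k * u k) - real_of_int k * (s k * v k)"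
      by (simp add: field_simps)
    finally show ?thesis
      by (simp only: d_def)
  qed
  have "(\<alpha>\<^sup>2 - (real n + 1/2)\<^sup>2) * pole_sum N m (Suc n) \<alpha> - (\<alpha>\<^sup>2 - (real m + 1/2)\<^sup>2) * pole_sum N (Suc m) n \<alpha>
      = (\<Sum>k\<in>?R. (\<alpha>\<^sup>2 - (real n + 1/2)\<^sup>2) * (s k * u k / (\<alpha> - real_of_int k - 1/2))
                 - (\<alpha>\<^sup>2 - (real m + 1/2)\<^sup>2) * (s k * v k / (\<alpha> - real_of_int k - 1/2)))"
    by (simp add: pole_sum_def s_def u_def v_def sum_subtractf sum_distrib_left mult_ac add_ac)
  also have "\<dots> = (\<Sum>k\<in>?R. (\<alpha> + 1/2) * (s k * u k) - (\<alpha> + 1/2) * (s k * v k)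
                       + real_of_int k * (s k * u k) - real_of_int k * (s k * v k))"
    by (simp only: pole_cancels)
  also have "\<dots> = (\<alpha> + 1/2) * (\<Sum>k\<in>?R. s k * u k) - (\<alpha> + 1/2) * (\<Sum>k\<in>?R. s k * v k)
                  + (\<Sum>k\<in>?R. real_of_int k * (s k * u k)) - (\<Sum>k\<in>?R. real_of_int k * (s k * v k))"
    by (simp only: sum.distrib sum_subtractf sum_distrib_left)
  also have "\<dots> = (real m - real n) * real (N choose m)"
    unfolding moments by (simp add: algebra_simps)
  finally show ?thesis .
qed

definition Aclosed :: "nat \<Rightarrow> nat \<Rightarrow> real \<Rightarrow> real" where
  "Aclosed m n \<alpha> = 2 * fact m * fact n * acoef \<alpha> m * acoef \<alpha> n / (real (m + n - 1) * fact (m + n - 1))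
                    * pole_sum (m + n - 1) m n \<alpha>"

lemma fact_acoef_Suc: "2 * fact (Suc k) * acoef \<alpha> (Suc k) = (\<alpha>\<^sup>2 - (real k + 1/2)\<^sup>2) * (fact k * acoef \<alpha> k)"
proof -
  have "2 * fact (Suc k) * acoef \<alpha> (Suc k) = fact k * (2 * real (Suc k) * acoef \<alpha> (Suc k))"
    by (simp only: fact_Suc mult_ac)
  then show ?thesis
    unfolding acoef_Suc by (simp only: mult_ac)
qed

lemma Aclosed_diff:
  assumes "0 < n" and not_half_int: "\<forall>k::int. \<alpha> \<noteq> real_of_int k + 1/2"
  shows "Aclosed m (Suc n) \<alpha> - Aclosed (Suc m) n \<alpha> = skew_prod \<alpha> m n"
proof -
  define N where "N = m + n"
  define X where "X = fact m * fact n * acoef \<alpha> m * acoef \<alpha> n / (real N * fact N)"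
  have "Aclosed m (Suc n) \<alpha> = fact m * acoef \<alpha> m * (2 * fact (Suc n) * acoef \<alpha> (Suc n)) / (real N * fact N)
      * pole_sum N m (Suc n) \<alpha>"
    by (simp add: Aclosed_def N_def mult_ac)
  also have "\<dots> = X * ((\<alpha>\<^sup>2 - (real n + 1/2)\<^sup>2) * pole_sum N m (Suc n) \<alpha>)"
    unfolding fact_acoef_Suc X_def by (simp add: mult_ac)
  finally have n_part: "Aclosed m (Suc n) \<alpha> = X * ((\<alpha>\<^sup>2 - (real n + 1/2)\<^sup>2) * pole_sum N m (Suc n) \<alpha>)" .
  have "Aclosed (Suc m) n \<alpha> = fact n * acoef \<alpha> n * (2 * fact (Suc m) * acoef \<alpha> (Suc m)) / (real N * fact N)
      * pole_sum N (Suc m) n \<alpha>"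
    by (simp add: Aclosed_def N_def mult_ac)
  also have "\<dots> = X * ((\<alpha>\<^sup>2 - (real m + 1/2)\<^sup>2) * pole_sum N (Suc m) n \<alpha>)"
    unfolding fact_acoef_Suc X_def by (simp add: mult_ac)
  finally have m_part: "Aclosed (Suc m) n \<alpha> = X * ((\<alpha>\<^sup>2 - (real m + 1/2)\<^sup>2) * pole_sum N (Suc m) n \<alpha>)" .
  have choose: "fact m * fact n * real (N choose m) = (fact N :: real)"
    using binomial_fact[of m N, where 'a = real] by (simp add: N_def field_simps)
  have "real N \<noteq> 0"
    using \<open>0 < n\<close> by (simp add: N_def)
  then have "X * ((real m - real n) * real (N choose m))
      = (real m - real n) * acoef \<alpha> m * acoef \<alpha> n * (fact m * fact n * real (N choose m)) / (real N * fact N)"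
    by (simp add: X_def field_simps)
  also have "\<dots> = (real m - real n) * acoef \<alpha> m * acoef \<alpha> n / real N"
    unfolding choose by simp
  also have "\<dots> = skew_prod \<alpha> m n"
    by (simp add: skew_prod_def N_def)
  finally have "X * ((real m - real n) * real (N choose m)) = skew_prod \<alpha> m n" .
  then show ?thesis
    unfolding n_part m_part pole_sum_diff[OF N_def not_half_int, symmetric] by (simp add: right_diff_distrib)
qed

lemma Aclosed_left_0:
  assumes "0 < n" shows "Aclosed 0 n \<alpha> = 0"
proof -
  have "ibinom (n - 1) k * ibinom (n - 1) (int n + k) = 0" for k
    using binom_weight_left_0[of "n - 1" k] assms by (simp add: of_nat_diff)
  then have "pole_sum (n - 1) 0 n \<alpha> = 0"
    unfolding pole_sum_def by (intro sum.neutral ballI) simp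
  then show ?thesis
    by (simp add: Aclosed_def)
qed

lemma Acoef_eq_Aclosed:
  assumes "0 < n" and not_half_int: "\<forall>k::int. \<alpha> \<noteq> real_of_int k + 1/2"
  shows "Acoef m n \<alpha> = Aclosed m n \<alpha>"
proof -
  \<comment> \<open>Aclosed m 0 is a junk value (it divides by real (m - 1)), so it is replaced by 0.\<close>
  have "(\<lambda>m n. Acoef m n \<alpha>) = (\<lambda>m n. if n = 0 then 0 else Aclosed m n \<alpha>)"
    by (rule recurrence_unique) (simp_all add: Acoef_diff Aclosed_diff[OF _ not_half_int] Aclosed_left_0)
  then show ?thesis using \<open>0 < n\<close> by (metis less_numeral_extra(3))
qed

theorem proposition1p12:
  shows "\<exists>A :: nat \<Rightarrow> nat \<Rightarrow> real \<Rightarrow> real.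
    (\<forall>\<alpha> i j. lhs_coeff \<alpha> i j = rhs_coeff (\<lambda>m n. A m n \<alpha>) i j)
  \<and> (\<forall>m n. \<exists>p :: rat poly. \<forall>\<alpha>. A m n \<alpha> = poly (map_poly of_rat p) \<alpha>)
  \<and> (\<forall>\<alpha> m n. (m, n) \<noteq> (0, 0) \<longrightarrow>
        A m (n + 1) \<alpha> - A (m + 1) n \<alpha>
          = (real m - real n) / (real m + real n) * acoef \<alpha> m * acoef \<alpha> n)
  \<and> (\<forall>\<alpha> m. A m 0 \<alpha> = 0) \<and> (\<forall>\<alpha> n. A 0 n \<alpha> = 0)
  \<and> (\<forall>B :: nat \<Rightarrow> nat \<Rightarrow> real \<Rightarrow> real.
        (\<forall>\<alpha> m n. (m, n) \<noteq> (0, 0) \<longrightarrow>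
           B m (n + 1) \<alpha> - B (m + 1) n \<alpha>
             = (real m - real n) / (real m + real n) * acoef \<alpha> m * acoef \<alpha> n)
      \<and> (\<forall>\<alpha> m. B m 0 \<alpha> = 0) \<and> (\<forall>\<alpha> n. B 0 n \<alpha> = 0) \<longrightarrow> B = A)
  \<and> (\<forall>\<alpha> m n. 1 \<le> m \<longrightarrow> 1 \<le> n \<longrightarrow>
        A m n \<alpha> = (\<Sum>r\<in>{m..m+n-1}. (real r - real (m+n-1-r)) / real (r + (m+n-1-r))
                                       * acoef \<alpha> r * acoef \<alpha> (m+n-1-r))
      \<and> A m n \<alpha> = (\<Sum>r\<in>{n..m+n-1}. (real r - real (m+n-1-r)) / real (r + (m+n-1-r))
                                       * acoef \<alpha> r * acoef \<alpha> (m+n-1-r))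
      \<and> ((\<forall>k::int. \<alpha> \<noteq> real_of_int k + 1/2) \<longrightarrow>
          A m n \<alpha> = 2 * fact m * fact n * acoef \<alpha> m * acoef \<alpha> n
                      / (real (m+n-1) * fact (m+n-1))
                    * (\<Sum>k\<in>{-(int m + int n)..int m + int n}.
                         (-1) ^ nat \<bar>k\<bar> * ibinom (m+n-1) (int m + k) * ibinom (m+n-1) (int n + k)
                         / (\<alpha> - real_of_int k - 1/2))))"
  apply (intro exI[of _ Acoef] conjI allI impI)
  subgoal by (rule lhs_coeff_eq_rhs_coeff)
  subgoal by (metis rat_poly_fun_ratpoly rat_poly_fun_Acoef)
  subgoal using Acoef_diff by (simp add: skew_prod_def)
  subgoal by simp
  subgoal by simp
  subgoal by (rule Acoef_unique) (auto simp: skew_prod_def)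
  subgoal by (simp add: Acoef_def antidiag_tail_def skew_prod_def)
  subgoal by (simp add: Acoef_def antidiag_tail_swap[OF skew_prod_antisym] skew_prod_def)
  subgoal by (simp add: Acoef_eq_Aclosed Aclosed_def pole_sum_def of_nat_diff)
  done

end
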